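(* For every integer $r\ge-1$, the generating function $\sum_\pi q^{|\pi|}$ over all partitions $\pi$ with $n$ copies of $n$ (including the empty one) in which, with parts in ascending lexicographic order, the weighted difference between each part and the preceding part is at least $r$, equals $$\sum_{m\ge0}\frac{q^{m^2+r\binom m2}}{(q;q)_m\,(q;q^2)_m}.$$
   Context: $M=\{m_i: 1\le i\le m\}$; a partition with $n$ copies of $n$ is a finite multiset of elements of $M$, $|\pi|$ the sum of values (first entries). Lexicographic order: $m_i>n_j$ iff $m>n$, or $m=n$ and $i>j$. Weighted difference $((m_i-n_j))=m-n-i-j$. $(a;q)_m=\prod_{j=0}^{m-1}(1-aq^j)$. *)

theory Defs
  imports "HOL-Computational_Algebra.Formal_Power_Series" "HOL-Library.Multiset"
    "HOL-Library.Product_Lexorder"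
begin

text \<open>A part m_i is encoded as the pair (m, i) with 1 <= i <= m.
  The product order from Product_Lexorder is exactly the lexicographic order
  of the paper: (m,i) > (n,j) iff m > n, or m = n and i > j.\<close>

definition in_M :: "nat \<times> nat \<Rightarrow> bool" where
  "in_M p \<longleftrightarrow> 1 \<le> snd p \<and> snd p \<le> fst p"

definition wdiff :: "nat \<times> nat \<Rightarrow> nat \<times> nat \<Rightarrow> int" where
  "wdiff a b = int (fst a) - int (fst b) - int (snd a) - int (snd b)"

definition ncopy_partition :: "(nat \<times> nat) multiset \<Rightarrow> bool" where
  "ncopy_partition P \<longleftrightarrow> (\<forall>p \<in># P. in_M p)"

definition pweight :: "(nat \<times> nat) multiset \<Rightarrow> nat" where
  "pweight P = sum_mset (image_mset fst P)"

definition wdiff_at_least :: "int \<Rightarrow> (nat \<times> nat) multiset \<Rightarrow> bool" where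
  "wdiff_at_least r P \<longleftrightarrow>
     (let xs = sorted_list_of_multiset P in
       \<forall>k. Suc k < length xs \<longrightarrow> wdiff (xs ! Suc k) (xs ! k) \<ge> r)"

text \<open>q-Pochhammer (a;q)_m specialised: (q^a; q^b)_m = prod_{j<m} (1 - q^(a + b j)).\<close>
definition qpoch_fps :: "nat \<Rightarrow> nat \<Rightarrow> nat \<Rightarrow> real fps" where
  "qpoch_fps a b m = (\<Prod>j<m. 1 - fps_X ^ (a + b * j))"

end

(* Represent a partition by the ascending list of its parts. For r >= -1 the weighted-difference
   condition propagates along the list: every later part m_i satisfies m - i >= a + j + r, where a_j
   is the first part. In particular the lists are strictly increasing, and only the first part can
   lie on the diagonal (m_m).

   Let F_m count admissible lists of length m and split them by the first part. If it is off the
   diagonal, then so is every part, and lowering all values by 1 is a bijection onto all admissible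
   lists of length m; this class contributes q^m F_m. If it is k_k with k >= 2, replacing it by
   (k-1)_(k-1) and lowering the other values by 2 maps onto the lists starting on the diagonal,
   losing weight 2m - 1. If it is 1_1, deleting it and lowering the others by r + 2 maps onto all
   admissible lists of length m - 1. Hence
     F_m (1 - q^m) (1 - q^(2m-1)) = q^(1 + (m-1)(r+2)) F_(m-1),
   so F_m = q^(m^2 + r binom(m,2)) / ((q;q)_m (q;q^2)_m), and summing over m gives the theorem. *)

theory Submission
  imports Defs
begin

definition weight_gf :: "'a set \<Rightarrow> ('a \<Rightarrow> nat) \<Rightarrow> real fps" where
  "weight_gf A w = Abs_fps (\<lambda>N. real (card {x\<in>A. w x = N}))"

lemma weight_gf_bij_shift:
  assumes bij: "bij_betw f A B" and shift: "\<And>x. x \<in> A \<Longrightarrow> v (f x) + k = w x"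
  shows "weight_gf A w = fps_X ^ k * weight_gf B v"
proof (rule fps_ext)
  fix N
  show "fps_nth (weight_gf A w) N = fps_nth (fps_X ^ k * weight_gf B v) N"
  proof (cases "k \<le> N")
    case True
    have "f ` {x\<in>A. w x = N} = {y\<in>B. v y = N - k}"
    proof (intro equalityI subsetI)
      fix y assume "y \<in> f ` {x\<in>A. w x = N}"
      then obtain x where "x \<in> A" "w x = N" "y = f x" by blast
      then show "y \<in> {y\<in>B. v y = N - k}"
        using shift[of x] bij_betw_apply[OF bij] by auto
    next
      fix y assume y: "y \<in> {y\<in>B. v y = N - k}"
      then obtain x where "x \<in> A" "y = f x"
        using bij_betw_imp_surj_on[OF bij] by blast
      then show "y \<in> f ` {x\<in>A. w x = N}"
        using shift[of x] y True by auto
    qed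
    then have "bij_betw f {x\<in>A. w x = N} {y\<in>B. v y = N - k}"
      by (rule bij_betw_subset[OF bij, rotated]) auto
    then show ?thesis
      using True by (simp add: weight_gf_def fps_X_power_mult_nth bij_betw_same_card)
  next
    case False
    then have "{x\<in>A. w x = N} = {}"
      using shift by (metis (mono_tags, lifting) empty_Collect_eq le_add2)
    then have "card {x\<in>A. w x = N} = 0" by (simp only: card.empty)
    then show ?thesis using False by (simp add: weight_gf_def fps_X_power_mult_nth)
  qed
qed

lemma weight_gf_Un:
  assumes "A \<inter> B = {}" "\<And>N. finite {x\<in>A. w x = N}" "\<And>N. finite {x\<in>B. w x = N}"
  shows "weight_gf (A \<union> B) w = weight_gf A w + weight_gf B w"
proof (rule fps_ext)
  fix N
  have "{x\<in>A \<union> B. w x = N} = {x\<in>A. w x = N} \<union> {x\<in>B. w x = N}" by blast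
  moreover have "{x\<in>A. w x = N} \<inter> {x\<in>B. w x = N} = {}" using assms(1) by blast
  ultimately have "card {x\<in>A \<union> B. w x = N} = card {x\<in>A. w x = N} + card {x\<in>B. w x = N}"
    using assms(2,3) by (simp add: card_Un_disjoint)
  then show "fps_nth (weight_gf (A \<union> B) w) N = fps_nth (weight_gf A w + weight_gf B w) N"
    by (simp add: weight_gf_def)
qed

lemma weight_gf_sums_classes:
  assumes fin: "\<And>N. finite {x\<in>A. w x = N}" and le: "\<And>x. x \<in> A \<Longrightarrow> c x \<le> w x"
  shows "(\<lambda>m. weight_gf {x\<in>A. c x = m} w) sums weight_gf A w"
  unfolding sums_def
proof (rule tendsto_fpsI)
  fix N
  have "fps_nth (\<Sum>m<n. weight_gf {x\<in>A. c x = m} w) N = fps_nth (weight_gf A w) N" if "N < n" for n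
  proof -
    have "{x\<in>A. w x = N} = (\<Union>m<n. {x\<in>A. c x = m \<and> w x = N})"
      using le that by (auto intro: le_less_trans)
    moreover have "card (\<Union>m<n. {x\<in>A. c x = m \<and> w x = N}) = (\<Sum>m<n. card {x\<in>A. c x = m \<and> w x = N})"
      by (rule card_UN_disjoint) (auto intro: rev_finite_subset[OF fin])
    ultimately have "card {x\<in>A. w x = N} = (\<Sum>m<n. card {x\<in>A. c x = m \<and> w x = N})"
      by simp
    then show ?thesis by (simp add: weight_gf_def fps_sum_nth)
  qed
  then show "\<forall>\<^sub>F n in sequentially. fps_nth (\<Sum>m<n. weight_gf {x\<in>A. c x = m} w) N = fps_nth (weight_gf A w) N"
    unfolding eventually_sequentially by (metis Suc_le_eq)
qed

definition admissible :: "int \<Rightarrow> (nat \<times> nat) list \<Rightarrow> bool" where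
  "admissible r xs \<longleftrightarrow> list_all in_M xs \<and> successively (\<lambda>a b. r \<le> wdiff b a) xs"

definition list_weight :: "(nat \<times> nat) list \<Rightarrow> nat" where
  "list_weight xs = sum_list (map fst xs)"

definition raise_parts :: "nat \<Rightarrow> (nat \<times> nat) list \<Rightarrow> (nat \<times> nat) list" where
  "raise_parts k = map (apfst (\<lambda>n. n + k))"

definition lower_parts :: "nat \<Rightarrow> (nat \<times> nat) list \<Rightarrow> (nat \<times> nat) list" where
  "lower_parts k = map (apfst (\<lambda>n. n - k))"

lemma lower_parts_Cons [simp]: "lower_parts k (a # zs) = (fst a - k, snd a) # lower_parts k zs"
  by (cases a) (simp add: lower_parts_def)

lemma raise_parts_Cons [simp]: "raise_parts k (a # zs) = (fst a + k, snd a) # raise_parts k zs"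
  by (cases a) (simp add: raise_parts_def)

lemma lower_parts_eq_Nil_iff [simp]: "lower_parts k zs = [] \<longleftrightarrow> zs = []"
  by (simp add: lower_parts_def)

lemma raise_parts_eq_Nil_iff [simp]: "raise_parts k zs = [] \<longleftrightarrow> zs = []"
  by (simp add: raise_parts_def)

lemma length_lower_parts [simp]: "length (lower_parts k zs) = length zs"
  by (simp add: lower_parts_def)

lemma length_raise_parts [simp]: "length (raise_parts k zs) = length zs"
  by (simp add: raise_parts_def)

lemma lower_raise_parts [simp]: "lower_parts k (raise_parts k xs) = xs"
  by (induction xs) (auto simp: lower_parts_def raise_parts_def)

lemma raise_lower_parts: "\<forall>x\<in>set xs. k \<le> fst x \<Longrightarrow> raise_parts k (lower_parts k xs) = xs"
  by (induction xs) (auto simp: lower_parts_def raise_parts_def)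

lemma list_weight_lower_parts:
  "\<forall>x\<in>set xs. k \<le> fst x \<Longrightarrow> list_weight (lower_parts k xs) + k * length xs = list_weight xs"
  by (induction xs) (auto simp: list_weight_def lower_parts_def)

lemma admissible_Nil [simp]: "admissible r []"
  by (simp add: admissible_def)

lemma admissible_Cons:
  "admissible r (a # xs) \<longleftrightarrow> in_M a \<and> admissible r xs \<and> (xs \<noteq> [] \<longrightarrow> r \<le> wdiff (hd xs) a)"
  by (auto simp: admissible_def successively_Cons)

lemma admissible_raise_parts: "admissible r xs \<Longrightarrow> admissible r (raise_parts k xs)"
  by (auto simp: admissible_def raise_parts_def successively_map list.pred_map in_M_def wdiff_def
           elim!: successively_mono list.pred_mono_strong)

lemma admissible_lower_parts:
  assumes "admissible r xs" "\<forall>x\<in>set xs. snd x + k \<le> fst x"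
  shows "admissible r (lower_parts k xs)"
  using assms
  by (induction xs) (auto simp: admissible_Cons lower_parts_def in_M_def wdiff_def hd_map)

lemma length_le_list_weight: "admissible r xs \<Longrightarrow> length xs \<le> list_weight xs"
  by (induction xs) (auto simp: admissible_Cons list_weight_def in_M_def)

(* The value plus the index of the parts increases along an admissible list, as r >= -1 and
   indices are positive. *)
lemma admissible_tail_gap:
  assumes "admissible r (a # xs)" "r \<ge> -1" "x \<in> set xs"
  shows "int (fst a + snd a) + r \<le> int (fst x) - int (snd x)"
  using assms
proof (induction xs arbitrary: a)
  case (Cons b xs)
  have "int (fst a + snd a) + r \<le> int (fst b) - int (snd b)"
    using Cons.prems(1) by (simp add: admissible_Cons wdiff_def)
  moreover have "snd b \<ge> 1" and "admissible r (b # xs)"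
    using Cons.prems(1) by (auto simp: admissible_Cons in_M_def)
  ultimately show ?case
    using Cons.IH[of b] Cons.prems(2,3) by force
qed simp

lemma admissible_tail_off_diagonal:
  assumes "admissible r (a # xs)" "r \<ge> -1" "x \<in> set xs"
  shows "snd x < fst x"
proof -
  have "1 \<le> snd a" "snd a \<le> fst a" using assms(1) by (auto simp: admissible_Cons in_M_def)
  then show ?thesis using admissible_tail_gap[OF assms] assms(2) by linarith
qed

lemma admissible_strictly_sorted:
  assumes "admissible r xs" "r \<ge> -1"
  shows "sorted_wrt (<) xs"
  using assms
proof (induction xs)
  case (Cons a xs)
  have "a < x" if "x \<in> set xs" for x
  proof -
    have "1 \<le> snd a" "1 \<le> snd x"
      using Cons.prems(1) that by (auto simp: admissible_def list_all_iff in_M_def)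
    then have "fst a < fst x"
      using admissible_tail_gap[OF Cons.prems(1,2) that] Cons.prems(2) by linarith
    then show ?thesis by (simp add: less_prod_def)
  qed
  then show ?case
    using Cons by (simp add: admissible_Cons)
qed simp

lemma finite_admissible_weight: "finite {xs. admissible r xs \<and> list_weight xs = N}"
proof (rule finite_subset)
  show "{xs. admissible r xs \<and> list_weight xs = N} \<subseteq> {xs. set xs \<subseteq> {..N} \<times> {..N} \<and> length xs \<le> N}"
  proof (rule subsetI, intro CollectI conjI)
    fix xs assume "xs \<in> {xs. admissible r xs \<and> list_weight xs = N}"
    then have xs: "admissible r xs" "list_weight xs = N" by auto
    show "length xs \<le> N" using length_le_list_weight[OF xs(1)] xs(2) by simp
    show "set xs \<subseteq> {..N} \<times> {..N}"
    proof (rule subsetI)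
      fix p assume p: "p \<in> set xs"
      have "fst p \<le> list_weight xs"
        unfolding list_weight_def using p by (simp add: member_le_sum_list)
      moreover have "snd p \<le> fst p"
        using xs(1) p unfolding admissible_def list_all_iff in_M_def by blast
      ultimately show "p \<in> {..N} \<times> {..N}" using xs(2) by (cases p) simp
    qed
  qed
  show "finite {xs. set xs \<subseteq> {..N} \<times> {..N} \<and> length xs \<le> N}"
    by (rule finite_lists_length_le) simp
qed

definition admissible_lists :: "int \<Rightarrow> nat \<Rightarrow> (nat \<times> nat) list set" where
  "admissible_lists r m = {xs. admissible r xs \<and> length xs = m}"

lemma Cons_in_admissible_lists:
  "a # zs \<in> admissible_lists r (Suc m) \<longleftrightarrow>
     in_M a \<and> zs \<in> admissible_lists r m \<and> (zs \<noteq> [] \<longrightarrow> r \<le> wdiff (hd zs) a)"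
  by (auto simp: admissible_lists_def admissible_Cons)

lemma admissible_lists_SucE:
  assumes "xs \<in> admissible_lists r (Suc m)"
  obtains a zs where "xs = a # zs"
  using assms by (cases xs) (auto simp: admissible_lists_def)

lemma in_M_hd:
  assumes "xs \<in> admissible_lists r (Suc m)"
  shows "in_M (hd xs)"
proof -
  obtain a zs where "xs = a # zs" using assms by (rule admissible_lists_SucE)
  then show ?thesis using assms by (simp add: Cons_in_admissible_lists)
qed

lemma lower_parts_off_diagonal:
  assumes r: "r \<ge> -1" and xs: "xs \<in> admissible_lists r (Suc m)" and off: "snd (hd xs) < fst (hd xs)"
  shows "lower_parts 1 xs \<in> admissible_lists r (Suc m)"
    and "raise_parts 1 (lower_parts 1 xs) = xs"
    and "list_weight (lower_parts 1 xs) + Suc m = list_weight xs"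
proof -
  obtain a zs where xs_eq: "xs = a # zs" using xs by (rule admissible_lists_SucE)
  have gap: "\<forall>x\<in>set xs. snd x + 1 \<le> fst x"
    using xs off admissible_tail_off_diagonal[OF _ r, of a zs]
    by (fastforce simp: xs_eq admissible_lists_def)
  then have pos: "\<forall>x\<in>set xs. 1 \<le> fst x" by fastforce
  show "lower_parts 1 xs \<in> admissible_lists r (Suc m)"
    using xs admissible_lower_parts[OF _ gap] by (simp add: admissible_lists_def)
  show "raise_parts 1 (lower_parts 1 xs) = xs" by (rule raise_lower_parts[OF pos])
  show "list_weight (lower_parts 1 xs) + Suc m = list_weight xs"
    using xs list_weight_lower_parts[OF pos] by (simp add: admissible_lists_def)
qed

lemma raise_parts_off_diagonal:
  assumes ys: "ys \<in> admissible_lists r (Suc m)"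
  shows "raise_parts 1 ys \<in> admissible_lists r (Suc m)"
    and "snd (hd (raise_parts 1 ys)) < fst (hd (raise_parts 1 ys))"
proof -
  obtain b zs where ys_eq: "ys = b # zs" using ys by (rule admissible_lists_SucE)
  then have "in_M b" using ys by (simp add: Cons_in_admissible_lists)
  then show "snd (hd (raise_parts 1 ys)) < fst (hd (raise_parts 1 ys))"
    by (simp add: ys_eq in_M_def)
  show "raise_parts 1 ys \<in> admissible_lists r (Suc m)"
    using ys by (simp add: admissible_lists_def admissible_raise_parts)
qed

lemma bij_lower_parts_off_diagonal:
  assumes "r \<ge> -1"
  shows "bij_betw (lower_parts 1) {xs \<in> admissible_lists r (Suc m). snd (hd xs) < fst (hd xs)}
           (admissible_lists r (Suc m))"
  using lower_parts_off_diagonal[OF assms] raise_parts_off_diagonal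
  by (intro bij_betwI[where g = "raise_parts 1"] funcsetI) auto

fun shrink_head :: "(nat \<times> nat) list \<Rightarrow> (nat \<times> nat) list" where
  "shrink_head [] = []"
| "shrink_head (a # zs) = (fst a - 1, snd a - 1) # lower_parts 2 zs"

fun grow_head :: "(nat \<times> nat) list \<Rightarrow> (nat \<times> nat) list" where
  "grow_head [] = []"
| "grow_head (a # zs) = (fst a + 1, snd a + 1) # raise_parts 2 zs"

definition diagonal_lists :: "int \<Rightarrow> nat \<Rightarrow> (nat \<times> nat) list set" where
  "diagonal_lists r m = {xs \<in> admissible_lists r (Suc m). fst (hd xs) = snd (hd xs)}"

lemma shrink_head_diagonal:
  assumes r: "r \<ge> -1" and xs: "xs \<in> diagonal_lists r m" and two: "2 \<le> snd (hd xs)"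
  shows "shrink_head xs \<in> diagonal_lists r m"
    and "grow_head (shrink_head xs) = xs"
    and "list_weight (shrink_head xs) + (2 * m + 1) = list_weight xs"
proof -
  obtain a zs where xs_eq: "xs = a # zs"
    using xs by (auto simp: diagonal_lists_def elim: admissible_lists_SucE)
  have a: "fst a = snd a" "2 \<le> snd a" and zs: "zs \<in> admissible_lists r m"
    and hd: "zs \<noteq> [] \<Longrightarrow> r \<le> wdiff (hd zs) a"
    using xs two by (auto simp: diagonal_lists_def xs_eq Cons_in_admissible_lists)
  have gap: "\<forall>x\<in>set zs. snd x + 2 \<le> fst x"
    using admissible_tail_gap[of r a zs] xs r a
    by (force simp: diagonal_lists_def xs_eq admissible_lists_def)
  then have pos: "\<forall>x\<in>set zs. 2 \<le> fst x" by fastforce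
  have "lower_parts 2 zs \<in> admissible_lists r m"
    using zs gap by (simp add: admissible_lists_def admissible_lower_parts)
  moreover have "zs \<noteq> [] \<Longrightarrow> r \<le> wdiff (hd (lower_parts 2 zs)) (fst a - 1, snd a - 1)"
    using hd pos a by (cases zs) (auto simp: wdiff_def)
  ultimately show "shrink_head xs \<in> diagonal_lists r m"
    using a by (simp add: diagonal_lists_def xs_eq Cons_in_admissible_lists in_M_def)
  show "grow_head (shrink_head xs) = xs"
    using a pos by (simp add: xs_eq raise_lower_parts prod_eq_iff)
  show "list_weight (shrink_head xs) + (2 * m + 1) = list_weight xs"
    using list_weight_lower_parts[OF pos] zs a
    by (simp add: xs_eq list_weight_def admissible_lists_def)
qed

lemma grow_head_diagonal:
  assumes ys: "ys \<in> diagonal_lists r m"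
  shows "grow_head ys \<in> diagonal_lists r m"
    and "2 \<le> snd (hd (grow_head ys))"
    and "shrink_head (grow_head ys) = ys"
proof -
  obtain b zs where ys_eq: "ys = b # zs"
    using ys by (auto simp: diagonal_lists_def elim: admissible_lists_SucE)
  have b: "fst b = snd b" "1 \<le> snd b" and zs: "zs \<in> admissible_lists r m"
    and hd: "zs \<noteq> [] \<Longrightarrow> r \<le> wdiff (hd zs) b"
    using ys by (auto simp: diagonal_lists_def ys_eq Cons_in_admissible_lists in_M_def)
  have "raise_parts 2 zs \<in> admissible_lists r m"
    using zs by (simp add: admissible_lists_def admissible_raise_parts)
  moreover have "zs \<noteq> [] \<Longrightarrow> r \<le> wdiff (hd (raise_parts 2 zs)) (fst b + 1, snd b + 1)"
    using hd by (cases zs) (auto simp: wdiff_def)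
  ultimately show "grow_head ys \<in> diagonal_lists r m"
    using b by (simp add: diagonal_lists_def ys_eq Cons_in_admissible_lists in_M_def)
  show "2 \<le> snd (hd (grow_head ys))" and "shrink_head (grow_head ys) = ys"
    using b by (simp_all add: ys_eq prod_eq_iff)
qed

lemma bij_shrink_head_diagonal:
  assumes "r \<ge> -1"
  shows "bij_betw shrink_head {xs \<in> diagonal_lists r m. 2 \<le> snd (hd xs)} (diagonal_lists r m)"
  using shrink_head_diagonal[OF assms] grow_head_diagonal
  by (intro bij_betwI[where g = grow_head] funcsetI) auto

lemma drop_head_one:
  assumes r: "r \<ge> -1" and xs: "xs \<in> admissible_lists r (Suc m)" and one: "hd xs = (1, 1)"
  defines "s \<equiv> nat (r + 2)"
  shows "lower_parts s (tl xs) \<in> admissible_lists r m"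
    and "(1, 1) # raise_parts s (lower_parts s (tl xs)) = xs"
    and "list_weight (lower_parts s (tl xs)) + (1 + m * s) = list_weight xs"
proof -
  obtain zs where xs_eq: "xs = (1, 1) # zs"
    using xs one by (auto elim: admissible_lists_SucE)
  have zs: "zs \<in> admissible_lists r m"
    using xs by (simp add: xs_eq Cons_in_admissible_lists)
  have adm: "admissible r ((1, 1) # zs)"
    using xs by (simp add: xs_eq admissible_lists_def)
  have s: "int s = r + 2" using r by (simp add: s_def)
  have gap: "\<forall>x\<in>set zs. snd x + s \<le> fst x"
  proof
    fix x assume "x \<in> set zs"
    from admissible_tail_gap[OF adm r this] s have "int (snd x + s) \<le> int (fst x)" by simp
    then show "snd x + s \<le> fst x" by simp
  qed
  then have pos: "\<forall>x\<in>set zs. s \<le> fst x" by fastforce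
  show "lower_parts s (tl xs) \<in> admissible_lists r m"
    using zs gap by (simp add: xs_eq admissible_lists_def admissible_lower_parts)
  show "(1, 1) # raise_parts s (lower_parts s (tl xs)) = xs"
    by (simp add: xs_eq raise_lower_parts[OF pos])
  show "list_weight (lower_parts s (tl xs)) + (1 + m * s) = list_weight xs"
    using zs list_weight_lower_parts[OF pos]
    by (simp add: xs_eq admissible_lists_def list_weight_def mult.commute)
qed

lemma add_head_one:
  assumes r: "r \<ge> -1" and ys: "ys \<in> admissible_lists r m"
  shows "(1, 1) # raise_parts (nat (r + 2)) ys \<in> admissible_lists r (Suc m)"
proof -
  have "ys \<noteq> [] \<Longrightarrow> r \<le> wdiff (hd (raise_parts (nat (r + 2)) ys)) (1, 1)"
    using ys r by (cases ys) (auto simp: admissible_lists_def admissible_Cons in_M_def wdiff_def)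
  moreover have "raise_parts (nat (r + 2)) ys \<in> admissible_lists r m"
    using ys by (simp add: admissible_lists_def admissible_raise_parts)
  ultimately show ?thesis
    by (simp add: Cons_in_admissible_lists in_M_def)
qed

lemma bij_drop_head_one:
  assumes "r \<ge> -1"
  shows "bij_betw (\<lambda>xs. lower_parts (nat (r + 2)) (tl xs))
           {xs \<in> admissible_lists r (Suc m). hd xs = (1, 1)} (admissible_lists r m)"
  using drop_head_one[OF assms] add_head_one[OF assms]
  by (intro bij_betwI[where g = "\<lambda>ys. (1, 1) # raise_parts (nat (r + 2)) ys"] funcsetI) auto

definition parts_gf :: "int \<Rightarrow> nat \<Rightarrow> real fps" where
  "parts_gf r m = weight_gf (admissible_lists r m) list_weight"

lemma finite_admissible_lists_weight:
  "S \<subseteq> admissible_lists r m \<Longrightarrow> finite {xs \<in> S. list_weight xs = N}"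
  by (rule finite_subset[OF _ finite_admissible_weight[of r N]]) (auto simp: admissible_lists_def)

lemma mult_one_minus_eq_if_eq_mult_add:
  fixes a x g :: "'a :: comm_ring_1"
  assumes "a = x * a + g"
  shows "a * (1 - x) = g"
proof -
  have "a * (1 - x) = a - x * a" by (simp add: algebra_simps)
  also have "\<dots> = g" by (metis assms add_diff_cancel_left')
  finally show ?thesis .
qed

definition diagonal_gf :: "int \<Rightarrow> nat \<Rightarrow> real fps" where
  "diagonal_gf r m = weight_gf (diagonal_lists r m) list_weight"

lemma parts_gf_Suc_eq:
  assumes r: "r \<ge> -1"
  shows "parts_gf r (Suc m) = fps_X ^ Suc m * parts_gf r (Suc m) + diagonal_gf r m"
proof -
  let ?L = "admissible_lists r (Suc m)"
  let ?off = "{xs \<in> ?L. snd (hd xs) < fst (hd xs)}"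
  have split: "?off \<union> diagonal_lists r m = ?L"
    by (auto dest: in_M_hd simp: in_M_def diagonal_lists_def)
  have "weight_gf (?off \<union> diagonal_lists r m) list_weight
      = weight_gf ?off list_weight + diagonal_gf r m"
    unfolding diagonal_gf_def
  proof (rule weight_gf_Un)
    show "?off \<inter> diagonal_lists r m = {}" by (auto simp: diagonal_lists_def)
  qed (rule finite_admissible_lists_weight; auto simp: diagonal_lists_def)+
  also have "weight_gf ?off list_weight = fps_X ^ Suc m * parts_gf r (Suc m)"
    unfolding parts_gf_def
    by (rule weight_gf_bij_shift[OF bij_lower_parts_off_diagonal[OF r]])
       (use lower_parts_off_diagonal(3)[OF r] in blast)
  finally show ?thesis by (simp only: split parts_gf_def[symmetric])
qed

lemma diagonal_gf_eq:
  assumes r: "r \<ge> -1"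
  shows "diagonal_gf r m
       = fps_X ^ (2 * m + 1) * diagonal_gf r m + fps_X ^ (1 + m * nat (r + 2)) * parts_gf r m"
proof -
  let ?D2 = "{xs \<in> diagonal_lists r m. 2 \<le> snd (hd xs)}"
  let ?E = "{xs \<in> admissible_lists r (Suc m). hd xs = (1, 1)}"
  have split: "?D2 \<union> ?E = diagonal_lists r m"
    by (auto dest: in_M_hd simp: in_M_def prod_eq_iff diagonal_lists_def)
  have "weight_gf (?D2 \<union> ?E) list_weight = weight_gf ?D2 list_weight + weight_gf ?E list_weight"
  proof (rule weight_gf_Un)
    show "?D2 \<inter> ?E = {}" by auto
  qed (rule finite_admissible_lists_weight; auto simp: diagonal_lists_def)+
  also have "weight_gf ?D2 list_weight = fps_X ^ (2 * m + 1) * diagonal_gf r m"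
    unfolding diagonal_gf_def
    by (rule weight_gf_bij_shift[OF bij_shrink_head_diagonal[OF r]])
       (use shrink_head_diagonal(3)[OF r] in blast)
  also have "weight_gf ?E list_weight = fps_X ^ (1 + m * nat (r + 2)) * parts_gf r m"
    unfolding parts_gf_def
    by (rule weight_gf_bij_shift[OF bij_drop_head_one[OF r]])
       (use drop_head_one(3)[OF r] in blast)
  finally show ?thesis by (simp only: split diagonal_gf_def[symmetric])
qed

lemma parts_gf_recurrence:
  assumes r: "r \<ge> -1"
  shows "parts_gf r (Suc m) * (1 - fps_X ^ Suc m) * (1 - fps_X ^ (2 * m + 1))
       = fps_X ^ (1 + m * nat (r + 2)) * parts_gf r m"
  using mult_one_minus_eq_if_eq_mult_add[OF parts_gf_Suc_eq[OF r]]
        mult_one_minus_eq_if_eq_mult_add[OF diagonal_gf_eq[OF r]]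
  by simp

lemma parts_gf_0: "parts_gf r 0 = 1"
proof (rule fps_ext)
  fix N
  have "{xs \<in> admissible_lists r 0. list_weight xs = N} = (if N = 0 then {[]} else {})"
    by (auto simp: admissible_lists_def list_weight_def)
  then show "fps_nth (parts_gf r 0) N = fps_nth 1 N"
    by (simp add: parts_gf_def weight_gf_def)
qed

lemma qpoch_fps_Suc: "qpoch_fps a b (Suc m) = qpoch_fps a b m * (1 - fps_X ^ (a + b * m))"
  by (simp add: qpoch_fps_def)

lemma fps_nth_0_qpoch_fps: "0 < a \<Longrightarrow> fps_nth (qpoch_fps a b m) 0 = 1"
  by (induction m) (simp_all add: qpoch_fps_Suc qpoch_fps_def)

lemma nat_sq_plus_choose2_Suc:
  fixes r :: int
  assumes r: "r \<ge> -1"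
  shows "nat (int ((Suc m)\<^sup>2) + r * int (Suc m choose 2))
       = nat (int (m\<^sup>2) + r * int (m choose 2)) + (1 + m * nat (r + 2))"
proof -
  have "m choose 2 \<le> m\<^sup>2"
    by (cases "2 \<le> m") (simp_all add: binomial_le_pow binomial_eq_0)
  moreover have "- int (m choose 2) \<le> r * int (m choose 2)"
    using mult_right_mono[OF r, of "int (m choose 2)"] by simp
  ultimately have nonneg: "0 \<le> int (m\<^sup>2) + r * int (m choose 2)" by linarith
  have "Suc m choose 2 = (m choose 2) + m" by (simp add: numeral_2_eq_2)
  then have "int ((Suc m)\<^sup>2) + r * int (Suc m choose 2)
      = (int (m\<^sup>2) + r * int (m choose 2)) + (1 + int m * (r + 2))"
    by (simp add: power2_eq_square algebra_simps)
  then show ?thesis using nonneg r by (simp add: nat_add_distrib nat_mult_distrib)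
qed

lemma parts_gf_mult_qpoch:
  assumes r: "r \<ge> -1"
  shows "parts_gf r m * (qpoch_fps 1 1 m * qpoch_fps 1 2 m) = fps_X ^ nat (int (m\<^sup>2) + r * int (m choose 2))"
proof (induction m)
  case 0
  then show ?case by (simp add: parts_gf_0 qpoch_fps_def binomial_eq_0)
next
  case (Suc m)
  have "parts_gf r (Suc m) * (qpoch_fps 1 1 (Suc m) * qpoch_fps 1 2 (Suc m))
      = (parts_gf r (Suc m) * (1 - fps_X ^ Suc m) * (1 - fps_X ^ (2 * m + 1)))
        * (qpoch_fps 1 1 m * qpoch_fps 1 2 m)"
    by (simp add: qpoch_fps_Suc mult_ac)
  also have "\<dots> = fps_X ^ (1 + m * nat (r + 2)) * parts_gf r m * (qpoch_fps 1 1 m * qpoch_fps 1 2 m)"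
    by (simp only: parts_gf_recurrence[OF r])
  also have "\<dots> = fps_X ^ (1 + m * nat (r + 2)) * fps_X ^ nat (int (m\<^sup>2) + r * int (m choose 2))"
    by (simp only: mult.assoc Suc.IH)
  also have "\<dots> = fps_X ^ nat (int ((Suc m)\<^sup>2) + r * int (Suc m choose 2))"
    by (simp only: nat_sq_plus_choose2_Suc[OF r] power_add mult.commute)
  finally show ?case .
qed

lemma closed_form_eq_parts_gf:
  assumes r: "r \<ge> -1"
  shows "fps_X ^ nat (int (m\<^sup>2) + r * int (m choose 2)) * inverse (qpoch_fps 1 1 m * qpoch_fps 1 2 m)
       = parts_gf r m"
proof -
  let ?Q = "qpoch_fps 1 1 m * qpoch_fps 1 2 m"
  have "fps_nth ?Q 0 \<noteq> 0" by (simp add: fps_nth_0_qpoch_fps)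
  then have "?Q * inverse ?Q = 1" by (rule inverse_mult_eq_1')
  then have "parts_gf r m * ?Q * inverse ?Q = parts_gf r m"
    by (metis mult.assoc mult_1_right)
  then show ?thesis by (simp only: parts_gf_mult_qpoch[OF r])
qed

lemma wdiff_at_least_iff_successively:
  "wdiff_at_least r P \<longleftrightarrow> successively (\<lambda>a b. r \<le> wdiff b a) (sorted_list_of_multiset P)"
  by (simp add: wdiff_at_least_def successively_conv_nth Let_def)

lemma admissible_sorted_list_of_multiset_iff:
  "admissible r (sorted_list_of_multiset P) \<longleftrightarrow> ncopy_partition P \<and> wdiff_at_least r P"
  by (simp add: admissible_def ncopy_partition_def wdiff_at_least_iff_successively list_all_iff)

lemma pweight_mset: "pweight (mset xs) = list_weight xs"
  by (simp add: pweight_def list_weight_def sum_mset_sum_list flip: mset_map)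

lemma bij_sorted_list_of_multiset_admissible:
  assumes r: "r \<ge> -1"
  shows "bij_betw sorted_list_of_multiset {P. ncopy_partition P \<and> wdiff_at_least r P} {xs. admissible r xs}"
proof (rule bij_betw_byWitness[where f' = mset])
  have sort_id: "sorted_list_of_multiset (mset xs) = xs" if "admissible r xs" for xs
    using admissible_strictly_sorted[OF that r] by (simp add: sorted_sort_id strict_sorted_imp_sorted)
  then show "\<forall>xs\<in>{xs. admissible r xs}. sorted_list_of_multiset (mset xs) = xs" by blast
  show "\<forall>P\<in>{P. ncopy_partition P \<and> wdiff_at_least r P}. mset (sorted_list_of_multiset P) = P" by simp
  show "sorted_list_of_multiset ` {P. ncopy_partition P \<and> wdiff_at_least r P} \<subseteq> {xs. admissible r xs}"
    by (auto simp: admissible_sorted_list_of_multiset_iff)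
  show "mset ` {xs. admissible r xs} \<subseteq> {P. ncopy_partition P \<and> wdiff_at_least r P}"
    using sort_id by (force simp flip: admissible_sorted_list_of_multiset_iff)
qed

theorem corollary25:
  fixes r :: int
  assumes "r \<ge> -1"
  shows "(\<lambda>m::nat. fps_X ^ nat (int (m\<^sup>2) + r * int (m choose 2))
            * inverse (qpoch_fps 1 1 m * qpoch_fps 1 2 m))
         sums
         Abs_fps (\<lambda>N. real (card {P. ncopy_partition P \<and> wdiff_at_least r P
                                      \<and> pweight P = N}))"
proof -
  have "parts_gf r sums weight_gf {xs. admissible r xs} list_weight"
    unfolding parts_gf_def[abs_def] admissible_lists_def
    using weight_gf_sums_classes[of "{xs. admissible r xs}" list_weight length]
    by (simp add: finite_admissible_weight length_le_list_weight)
  also have "weight_gf {xs. admissible r xs} list_weight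
      = weight_gf {P. ncopy_partition P \<and> wdiff_at_least r P} pweight"
    using weight_gf_bij_shift[OF bij_sorted_list_of_multiset_admissible[OF assms], of list_weight 0 pweight]
    by (simp add: flip: pweight_mset)
  finally have "parts_gf r sums weight_gf {P. ncopy_partition P \<and> wdiff_at_least r P} pweight" .
  moreover have "(\<lambda>m. fps_X ^ nat (int (m\<^sup>2) + r * int (m choose 2))
      * inverse (qpoch_fps 1 1 m * qpoch_fps 1 2 m)) = parts_gf r"
    using closed_form_eq_parts_gf[OF assms] by (rule ext)
  ultimately show ?thesis by (simp add: weight_gf_def)
qed

end
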